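(* Let $p$ be an indecomposable permutation avoiding $3241$ and $4321$ that contains the pattern $321$, with associated triple $(a,b,c)$. If $c$ is finite, then $c>b$.
   Context: Permutations of $[n]$ are in one-line notation; pattern containment/avoidance is in the usual classical sense. Indecomposable: no $k$ with $1\le k\le n-1$ and $\{p_1,\dots,p_k\}=\{1,\dots,k\}$. An entry is a left-to-right maximum (LRMax) if it exceeds all entries to its left. For a $321$-containing permutation $p$, the associated triple $(a,b,c)$ is: $a$ is the rightmost entry of $p$ that plays the role of the "1" in some occurrence of $321$; $b$ is the rightmost entry to the left of $a$ that exceeds $a$; $c$ is the first entry to the right of $a$ that is not a LRMax, with $c=\infty$ if no such entry exists. *)

theory Defs
  imports Main
begin

text \<open>Permutations of [n] in one-line notation, as lists p = [p_1, ..., p_n]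
  (0-based list positions).\<close>

definition is_perm :: "nat list \<Rightarrow> bool" where
  "is_perm p \<longleftrightarrow> distinct p \<and> set p = {1..length p}"

definition contains :: "nat list \<Rightarrow> nat list \<Rightarrow> bool" where
  "contains p q \<longleftrightarrow> (\<exists>idx :: nat list. length idx = length q \<and> sorted_wrt (<) idx \<and>
     (\<forall>i\<in>set idx. i < length p) \<and>
     (\<forall>i<length q. \<forall>j<length q. (p ! (idx ! i) < p ! (idx ! j) \<longleftrightarrow> q ! i < q ! j)))"

definition avoids :: "nat list \<Rightarrow> nat list \<Rightarrow> bool" where
  "avoids p q \<longleftrightarrow> \<not> contains p q"

definition indecomposable :: "nat list \<Rightarrow> bool" where
  "indecomposable p \<longleftrightarrow>
     \<not> (\<exists>k. 1 \<le> k \<and> k \<le> length p - 1 \<and> set (take k p) = {1..k})"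

definition a_pos :: "nat list \<Rightarrow> nat" where
  "a_pos p = Max {i. i < length p \<and> (\<exists>j k. j < k \<and> k < i \<and> p ! j > p ! k \<and> p ! k > p ! i)}"

definition b_pos :: "nat list \<Rightarrow> nat" where
  "b_pos p = Max {j. j < a_pos p \<and> p ! j > p ! a_pos p}"

definition is_LRMax :: "nat list \<Rightarrow> nat \<Rightarrow> bool" where
  "is_LRMax p m \<longleftrightarrow> (\<forall>l<m. p ! l < p ! m)"

definition triple_a :: "nat list \<Rightarrow> nat" where
  "triple_a p = p ! a_pos p"

definition triple_b :: "nat list \<Rightarrow> nat" where
  "triple_b p = p ! b_pos p"

text \<open>c: first entry right of a that is not a LRMax; None encodes c = \<infinity>.\<close>
definition triple_c :: "nat list \<Rightarrow> nat option" where
  "triple_c p = (let S = {m. a_pos p < m \<and> m < length p \<and> \<not> is_LRMax p m} in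
     if S = {} then None else Some (p ! Min S))"

end

theory Submission
  imports Defs
begin

text \<open>Every entry x to the right of a exceeds b. Write a = p_i with a 321-occurrence
  p_j > p_k > a, so that k \<le> pos(b). If x < b, then x > p_k, since otherwise p_j p_k x
  would be a 321 whose 1 lies right of a. Hence p_k < x < b and k < pos(b). Now
  p_j > b would make p_j b x a 321 ending right of a, while p_j < b makes
  p_j p_k b a an occurrence of 3241.\<close>

lemma contains_321_obtains:
  assumes "contains p [3,2,1]"
  obtains j k i where "j < k" "k < i" "i < length p" "p ! j > p ! k" "p ! k > p ! i"
proof -
  obtain idx where len: "length idx = 3" and sorted: "sorted_wrt (<) idx"
    and bounded: "\<forall>i\<in>set idx. i < length p"
    and order: "\<forall>i<3. \<forall>j<3. (p ! (idx ! i) < p ! (idx ! j) \<longleftrightarrow> [3,2,1::nat] ! i < [3,2,1::nat] ! j)"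
    using assms unfolding contains_def by (metis length_Cons list.size(3) numeral_3_eq_3 One_nat_def)
  have "idx ! 0 < idx ! 1" "idx ! 1 < idx ! 2"
    using sorted len by (auto simp: sorted_wrt_iff_nth_less)
  moreover have "idx ! 2 < length p" using bounded len by (simp add: nth_mem)
  moreover have "p ! (idx ! 1) < p ! (idx ! 0)" "p ! (idx ! 2) < p ! (idx ! 1)"
    using order[rule_format, of 1 0] order[rule_format, of 2 1] by simp_all
  ultimately show ?thesis using that by blast
qed

lemma contains_3241I:
  assumes "j < k" "k < l" "l < i" "i < length p"
    and "p ! i < p ! k" "p ! k < p ! j" "p ! j < p ! l"
  shows "contains p [3,2,4,1]"
  unfolding contains_def
proof (intro exI[of _ "[j,k,l,i]"] conjI)
  show "\<forall>x<length [3,2,4,1::nat]. \<forall>y<length [3,2,4,1::nat].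
    (p ! ([j,k,l,i] ! x) < p ! ([j,k,l,i] ! y)) = ([3,2,4,1::nat] ! x < [3,2,4,1] ! y)"
  proof (intro allI impI)
    fix x y :: nat assume "x < length [3,2,4,1::nat]" "y < length [3,2,4,1::nat]"
    then have "x \<in> {0,1,2,3}" "y \<in> {0,1,2,3}" by auto
    then show "(p ! ([j,k,l,i] ! x) < p ! ([j,k,l,i] ! y)) = ([3,2,4,1::nat] ! x < [3,2,4,1] ! y)"
      using assms by (elim insertE; simp)+
  qed
qed (use assms in auto)

lemma a_pos_321:
  assumes "contains p [3,2,1]"
  obtains j k where "j < k" "k < a_pos p" "a_pos p < length p"
    "p ! j > p ! k" "p ! k > p ! a_pos p"
proof -
  let ?A = "{i. i < length p \<and> (\<exists>j k. j < k \<and> k < i \<and> p ! j > p ! k \<and> p ! k > p ! i)}"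
  obtain j k i where "j < k" "k < i" "i < length p" "p ! j > p ! k" "p ! k > p ! i"
    using contains_321_obtains[OF assms] .
  then have "i \<in> ?A" by auto
  then have "a_pos p \<in> ?A" unfolding a_pos_def by (intro Max_in) auto
  then show ?thesis using that by auto
qed

lemma no_321_right_of_a_pos:
  assumes "a_pos p < i" "i < length p" "j < k" "k < i" "p ! k > p ! i"
  shows "\<not> p ! j > p ! k"
proof
  assume "p ! j > p ! k"
  with assms have "i \<in> {i. i < length p \<and> (\<exists>j k. j < k \<and> k < i \<and> p ! j > p ! k \<and> p ! k > p ! i)}"
    by auto
  then have "i \<le> a_pos p" unfolding a_pos_def by (intro Max_ge) auto
  with assms(1) show False by simp
qed

lemma b_pos_greatest:
  assumes "k < a_pos p" "p ! k > p ! a_pos p"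
  shows "k \<le> b_pos p" "b_pos p < a_pos p" "p ! b_pos p > p ! a_pos p"
proof -
  let ?B = "{j. j < a_pos p \<and> p ! j > p ! a_pos p}"
  have "finite ?B" "k \<in> ?B" using assms by auto
  then show "k \<le> b_pos p" unfolding b_pos_def by (rule Max_ge)
  have "b_pos p \<in> ?B" unfolding b_pos_def using \<open>finite ?B\<close> \<open>k \<in> ?B\<close> by (intro Max_in) auto
  then show "b_pos p < a_pos p" "p ! b_pos p > p ! a_pos p" by auto
qed

lemma triple_c_SomeE:
  assumes "triple_c p = Some c"
  obtains m where "a_pos p < m" "m < length p" "c = p ! m"
proof -
  let ?S = "{m. a_pos p < m \<and> m < length p \<and> \<not> is_LRMax p m}"
  have "?S \<noteq> {}" and c: "c = p ! Min ?S"
    using assms unfolding triple_c_def by (auto simp: Let_def split: if_splits)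
  then have "Min ?S \<in> ?S" by (intro Min_in) auto
  with c show ?thesis using that by blast
qed

lemma triple_b_less_right_of_a_pos:
  assumes "distinct p" "avoids p [3,2,4,1]" "contains p [3,2,1]"
    and "a_pos p < m" "m < length p"
  shows "triple_b p < p ! m"
proof -
  define i b where "i = a_pos p" and "b = b_pos p"
  obtain j k where jk: "j < k" "k < i" "i < length p" "p ! j > p ! k" "p ! k > p ! i"
    using a_pos_321[OF assms(3)] unfolding i_def by blast
  have kb: "k \<le> b" and b: "b < i" "p ! b > p ! i"
    using b_pos_greatest[of k p] jk unfolding i_def b_def by auto
  have p_inj: "x < length p \<Longrightarrow> y < length p \<Longrightarrow> x \<noteq> y \<Longrightarrow> p ! x \<noteq> p ! y" for x y
    using assms(1) by (simp add: nth_eq_iff_index_eq)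
  have no_321: "\<not> (p ! x > p ! y \<and> p ! y > p ! m)" if "x < y" "y < m" for x y
    using no_321_right_of_a_pos[of p m x y] that assms(4,5) by auto
  show ?thesis
  proof (rule ccontr)
    assume "\<not> triple_b p < p ! m"
    moreover have "p ! m \<noteq> p ! b" using p_inj b jk assms(4,5) unfolding i_def by auto
    ultimately have mb: "p ! m < p ! b" unfolding triple_b_def b_def by simp
    have "p ! k \<noteq> p ! m" using p_inj jk assms(4,5) unfolding i_def by auto
    then have km: "p ! k < p ! m" using no_321[of j k] jk assms(4) unfolding i_def by auto
    with mb kb have kb': "k < b" by (cases "k = b") auto
    have "p ! j \<noteq> p ! b" using p_inj jk kb' b by auto
    moreover have "\<not> p ! j > p ! b" using no_321[of j b] jk kb' b mb assms(4) unfolding i_def by auto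
    ultimately have "p ! j < p ! b" by simp
    then have "contains p [3,2,4,1]" using contains_3241I[of j k b i p] jk kb' b by auto
    with assms(2) show False unfolding avoids_def by simp
  qed
qed

theorem corollary5:
  fixes p :: "nat list" and c :: nat
  assumes "is_perm p"
    and "indecomposable p"
    and "avoids p [3,2,4,1]"
    and "avoids p [4,3,2,1]"
    and "contains p [3,2,1]"
    and "triple_c p = Some c"
  shows "c > triple_b p"
proof -
  obtain m where "a_pos p < m" "m < length p" "c = p ! m"
    using triple_c_SomeE[OF assms(6)] .
  moreover have "distinct p" using assms(1) unfolding is_perm_def by simp
  ultimately show ?thesis using triple_b_less_right_of_a_pos assms(3,5) by blast
qed

end
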